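(* Fix any $\pi_0\in\mathbb R^N$ and $Z_0\in\mathbb R^{n_u\times n_x}$, and let $\Pi_0=\Pi(\pi_0)$. Let $\hat L$ be the optimal value (infimum, $+\infty$ if infeasible) of the convex approximation: minimize $(\eta+1)\zeta+\alpha_\pi^\top\pi$ over $S\in\mathbb S^{n_x}$, $Z\in\mathbb R^{n_u\times n_x}$, $\zeta\in\mathbb R$, $\pi\in\mathbb R^N$ subject to $\mathcal C_s(S,\Pi(\pi),Z;\Pi_0,Z_0)\preceq0$, $\mathcal F_2(S,\zeta)\preceq0$, $H\pi\le h$, $0\le\pi\le\mathbf1$. Then $L\le\hat L$, where $L$ is the optimal value of problem (R).
   Context: Let $N\ge1$, $n_{u_1},\dots,n_{u_N}\ge1$, $n_u=\sum_i n_{u_i}$, $n_x,n_w,n_z\ge1$. Fix real matrices $A\in\mathbb R^{n_x\times n_x}$, $B_u\in\mathbb R^{n_x\times n_u}$, $B_w\in\mathbb R^{n_x\times n_w}$, $C_z\in\mathbb R^{n_z\times n_x}$, $D_{wz}\in\mathbb R^{n_z\times n_w}$, constants $\alpha>0$, $\eta>0$, $\alpha_\pi\in\mathbb R^N$, $H\in\mathbb R^{r\times N}$, $h\in\mathbb R^r$. For $\pi\in\mathbb R^N$ let $\Pi(\pi)=\mathrm{blkdiag}(\pi_1 I_{n_{u_1}},\dots,\pi_N I_{n_{u_N}})$. Define $\mathcal F_1(S,Z,\pi)=\begin{bmatrix} AS+SA^\top+\alpha S-B_u\Pi Z-Z^\top\Pi B_u^\top & B_w\\ B_w^\top & -\alpha\eta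 I_{n_w}\end{bmatrix}$ ($\Pi=\Pi(\pi)$), $\mathcal F_2(S,\zeta)=\begin{bmatrix}-S&0&SC_z^\top\\0&-I_{n_w}&D_{wz}^\top\\ C_zS&D_{wz}&-\zeta I_{n_z}\end{bmatrix}$. Problem (R): minimize $(\eta+1)\zeta+\alpha_\pi^\top\pi$ subject to $\mathcal F_1\preceq0$, $\mathcal F_2\preceq0$, $H\pi\le h$, $0\le\pi\le\mathbf1$; optimal value $L$. With $X=B_u\Pi+Z^\top$, $X_0=B_u\Pi_0+Z_0^\top$, let $\mathcal H_{\mathrm{lin}}(\Pi,Z;\Pi_0,Z_0)=X_0X_0^\top-XX_0^\top-X_0X^\top$ and $\mathcal C_s(S,\Pi,Z;\Pi_0,Z_0)=\begin{bmatrix}AS+SA^\top+\alpha S+\tfrac12\mathcal H_{\mathrm{lin}}(\Pi,Z;\Pi_0,Z_0) & \tfrac1{\sqrt2}(B_u\Pi-Z^\top) & B_w\\ \tfrac1{\sqrt2}(B_u\Pi-Z^\top)^\top & -I_{n_u} & 0\\ B_w^\top&0&-\alpha\eta I_{n_w}\end{bmatrix}$. *)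

theory Defs
  imports "Jordan_Normal_Form.Matrix" "HOL-Library.Extended_Real"
begin

(* Block-index map: column/row j of the n_u-dimensional input belongs to block (blk_idx nus j),
   where nus = [n_{u_1},...,n_{u_N}]. *)
definition blk_idx :: "nat list \<Rightarrow> nat \<Rightarrow> nat" where
  "blk_idx nus j = concat (map (\<lambda>i. replicate (nus ! i) i) [0..<length nus]) ! j"

(* Pi(pi) = blkdiag(pi_1 I_{n_{u_1}}, ..., pi_N I_{n_{u_N}}) *)
definition Pi_mat :: "nat list \<Rightarrow> real vec \<Rightarrow> real mat" where
  "Pi_mat nus p = mat_diag (sum_list nus) (\<lambda>j. p $ blk_idx nus j)"

definition vstack :: "'a::zero mat \<Rightarrow> 'a mat \<Rightarrow> 'a mat" where
  "vstack A B = four_block_mat A (0\<^sub>m (dim_row A) 0) B (0\<^sub>m (dim_row B) 0)"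

definition hstack :: "'a::zero mat \<Rightarrow> 'a mat \<Rightarrow> 'a mat" where
  "hstack A B = four_block_mat A B (0\<^sub>m 0 (dim_col A)) (0\<^sub>m 0 (dim_col B))"

definition blk3 :: "'a::zero mat \<Rightarrow> 'a mat \<Rightarrow> 'a mat \<Rightarrow> 'a mat \<Rightarrow> 'a mat \<Rightarrow> 'a mat
    \<Rightarrow> 'a mat \<Rightarrow> 'a mat \<Rightarrow> 'a mat \<Rightarrow> 'a mat" where
  "blk3 M11 M12 M13 M21 M22 M23 M31 M32 M33 =
     four_block_mat (four_block_mat M11 M12 M21 M22) (vstack M13 M23) (hstack M31 M32) M33"

definition nsd :: "nat \<Rightarrow> real mat \<Rightarrow> bool" where
  "nsd n M \<longleftrightarrow> M \<in> carrier_mat n n \<and> transpose_mat M = M \<and>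
     (\<forall>v \<in> carrier_vec n. v \<bullet> (M *\<^sub>v v) \<le> 0)"

definition F1 :: "nat list \<Rightarrow> nat \<Rightarrow> real mat \<Rightarrow> real mat \<Rightarrow> real mat \<Rightarrow> real \<Rightarrow> real
    \<Rightarrow> real mat \<Rightarrow> real mat \<Rightarrow> real vec \<Rightarrow> real mat" where
  "F1 nus nw A Bu Bw \<alpha> \<eta> S Z p =
     (let P = Pi_mat nus p in
      four_block_mat (A * S + S * transpose_mat A + \<alpha> \<cdot>\<^sub>m S - Bu * P * Z
                        - transpose_mat Z * P * transpose_mat Bu)
                     Bw (transpose_mat Bw) ((- (\<alpha> * \<eta>)) \<cdot>\<^sub>m 1\<^sub>m nw))"

definition F2 :: "nat \<Rightarrow> nat \<Rightarrow> nat \<Rightarrow> real mat \<Rightarrow> real mat \<Rightarrow> real mat \<Rightarrow> real \<Rightarrow> real mat" where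
  "F2 nx nw nz Cz Dwz S \<zeta> =
     blk3 (- S) (0\<^sub>m nx nw) (S * transpose_mat Cz)
          (0\<^sub>m nw nx) (- (1\<^sub>m nw)) (transpose_mat Dwz)
          (Cz * S) Dwz ((- \<zeta>) \<cdot>\<^sub>m 1\<^sub>m nz)"

definition H_lin :: "real mat \<Rightarrow> real mat \<Rightarrow> real mat \<Rightarrow> real mat \<Rightarrow> real mat \<Rightarrow> real mat" where
  "H_lin Bu P Z P0 Z0 =
     (let X = Bu * P + transpose_mat Z; X0 = Bu * P0 + transpose_mat Z0 in
      X0 * transpose_mat X0 - X * transpose_mat X0 - X0 * transpose_mat X)"

definition C_s :: "nat \<Rightarrow> nat \<Rightarrow> real mat \<Rightarrow> real mat \<Rightarrow> real mat \<Rightarrow> real \<Rightarrow> real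
    \<Rightarrow> real mat \<Rightarrow> real mat \<Rightarrow> real mat \<Rightarrow> real mat \<Rightarrow> real mat \<Rightarrow> real mat" where
  "C_s nu nw A Bu Bw \<alpha> \<eta> S P Z P0 Z0 =
     blk3 (A * S + S * transpose_mat A + \<alpha> \<cdot>\<^sub>m S + (1/2) \<cdot>\<^sub>m H_lin Bu P Z P0 Z0)
          ((1 / sqrt 2) \<cdot>\<^sub>m (Bu * P - transpose_mat Z)) Bw
          (transpose_mat ((1 / sqrt 2) \<cdot>\<^sub>m (Bu * P - transpose_mat Z))) (- (1\<^sub>m nu)) (0\<^sub>m nu nw)
          (transpose_mat Bw) (0\<^sub>m nw nu) ((- (\<alpha> * \<eta>)) \<cdot>\<^sub>m 1\<^sub>m nw)"

definition pi_ok :: "nat \<Rightarrow> nat \<Rightarrow> real mat \<Rightarrow> real vec \<Rightarrow> real vec \<Rightarrow> bool" where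
  "pi_ok N r H h p \<longleftrightarrow> p \<in> carrier_vec N \<and> (\<forall>i<r. (H *\<^sub>v p) $ i \<le> h $ i)
     \<and> (\<forall>i<N. 0 \<le> p $ i \<and> p $ i \<le> 1)"

(* optimal value of problem (R), +\<infinity> if infeasible *)
definition L_R where
  "L_R nus nx nw nz r A Bu Bw Cz Dwz \<alpha> \<eta> \<alpha>\<pi> H h =
     Inf {ereal ((\<eta> + 1) * \<zeta> + \<alpha>\<pi> \<bullet> p) | S Z \<zeta> p.
        S \<in> carrier_mat nx nx \<and> transpose_mat S = S \<and> Z \<in> carrier_mat (sum_list nus) nx \<and>
        pi_ok (length nus) r H h p \<and>
        nsd (nx + nw) (F1 nus nw A Bu Bw \<alpha> \<eta> S Z p) \<and>
        nsd (nx + nw + nz) (F2 nx nw nz Cz Dwz S \<zeta>)}"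

definition L_hat where
  "L_hat nus nx nw nz r A Bu Bw Cz Dwz \<alpha> \<eta> \<alpha>\<pi> H h p0 Z0 =
     Inf {ereal ((\<eta> + 1) * \<zeta> + \<alpha>\<pi> \<bullet> p) | S Z \<zeta> p.
        S \<in> carrier_mat nx nx \<and> transpose_mat S = S \<and> Z \<in> carrier_mat (sum_list nus) nx \<and>
        pi_ok (length nus) r H h p \<and>
        nsd (nx + sum_list nus + nw)
          (C_s (sum_list nus) nw A Bu Bw \<alpha> \<eta> S (Pi_mat nus p) Z (Pi_mat nus p0) Z0) \<and>
        nsd (nx + nw + nz) (F2 nx nw nz Cz Dwz S \<zeta>)}"

end

theory Submission
  imports Defs
begin

text \<open>Write \<open>X = B\<^sub>u\<Pi> + Z\<^sup>T\<close> and \<open>Y = B\<^sub>u\<Pi> - Z\<^sup>T\<close>. Then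
  \<open>B\<^sub>u\<Pi>Z + Z\<^sup>T\<Pi>B\<^sub>u\<^sup>T = (XX\<^sup>T - YY\<^sup>T)/2\<close>, and \<open>(X - X\<^sub>0)(X - X\<^sub>0)\<^sup>T \<succeq> 0\<close> gives
  \<open>-XX\<^sup>T \<preceq> \<H>\<^sub>l\<^sub>i\<^sub>n\<close>. Hence the upper left block of \<open>\<F>\<^sub>1\<close> is dominated by
  \<open>AS + SA\<^sup>T + \<alpha>S + \<H>\<^sub>l\<^sub>i\<^sub>n/2 + YY\<^sup>T/2\<close>, which is what remains of \<open>\<C>\<^sub>s\<close> after eliminating its
  middle block row by a Schur complement. So every feasible point of the convex approximation is
  feasible for (R) with the same objective value, and the infimum over the larger set is smaller.\<close>

lemma scalar_prod_four_block_mat_mult_vec: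
  fixes A B C D :: "real mat"
  assumes A: "A \<in> carrier_mat n1 n1" and B: "B \<in> carrier_mat n1 n2"
    and C: "C \<in> carrier_mat n2 n1" and D: "D \<in> carrier_mat n2 n2"
    and a: "a \<in> carrier_vec n1" and d: "d \<in> carrier_vec n2"
  shows "(a @\<^sub>v d) \<bullet> (four_block_mat A B C D *\<^sub>v (a @\<^sub>v d))
     = a \<bullet> (A *\<^sub>v a) + a \<bullet> (B *\<^sub>v d) + d \<bullet> (C *\<^sub>v a) + d \<bullet> (D *\<^sub>v d)"
proof -
  have "(a @\<^sub>v d) \<bullet> (four_block_mat A B C D *\<^sub>v (a @\<^sub>v d))
     = a \<bullet> (A *\<^sub>v a + B *\<^sub>v d) + d \<bullet> (C *\<^sub>v a + D *\<^sub>v d)"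
    unfolding four_block_mat_mult_vec[OF A B C D a d]
    by (rule scalar_prod_append) (use A B C D a d in auto)
  then show ?thesis
    using A B C D a d by (simp add: scalar_prod_add_distrib[of _ n1] scalar_prod_add_distrib[of _ n2])
qed

lemma append_vec_carrier_vec_0: "y \<in> carrier_vec 0 \<Longrightarrow> x @\<^sub>v y = x"
  by (rule eq_vecI) auto

lemma vstack_mult_vec:
  fixes A B :: "real mat"
  assumes A: "A \<in> carrier_mat n1 m" and B: "B \<in> carrier_mat n2 m" and v: "v \<in> carrier_vec m"
  shows "vstack A B *\<^sub>v v = (A *\<^sub>v v) @\<^sub>v (B *\<^sub>v v)"
proof -
  have "vstack A B = four_block_mat A (0\<^sub>m n1 0) B (0\<^sub>m n2 0)"
    unfolding vstack_def using A B by simp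
  then show ?thesis
    using four_block_mat_mult_vec[OF A _ B _ v, of "0\<^sub>m n1 0" 0 "0\<^sub>m n2 0" "0\<^sub>v 0"] A B v
    by (auto simp: append_vec_carrier_vec_0 intro!: eq_vecI)
qed

lemma hstack_mult_vec:
  fixes A B :: "real mat"
  assumes A: "A \<in> carrier_mat m n1" and B: "B \<in> carrier_mat m n2"
    and a: "a \<in> carrier_vec n1" and d: "d \<in> carrier_vec n2"
  shows "hstack A B *\<^sub>v (a @\<^sub>v d) = A *\<^sub>v a + B *\<^sub>v d"
proof -
  have "hstack A B = four_block_mat A B (0\<^sub>m 0 n1) (0\<^sub>m 0 n2)"
    unfolding hstack_def using A B by simp
  then show ?thesis
    using four_block_mat_mult_vec[OF A B _ _ a d, of "0\<^sub>m 0 n1" 0 "0\<^sub>m 0 n2"] A B a d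
    by (auto simp: append_vec_carrier_vec_0 intro!: eq_vecI)
qed

lemma Pi_mat_carrier: "Pi_mat nus p \<in> carrier_mat (sum_list nus) (sum_list nus)"
  unfolding Pi_mat_def by simp

lemma transpose_Pi_mat: "transpose_mat (Pi_mat nus p) = Pi_mat nus p"
  unfolding Pi_mat_def mat_diag_def by (rule eq_matI) auto

lemma transpose_smult_mat: "transpose_mat (c \<cdot>\<^sub>m M) = c \<cdot>\<^sub>m transpose_mat M"
  by (rule eq_matI) auto

lemma smult_mat_mult_vec: "v \<in> carrier_vec (dim_col M) \<Longrightarrow> (c \<cdot>\<^sub>m M) *\<^sub>v v = c \<cdot>\<^sub>v (M *\<^sub>v v)"
  for M :: "real mat"
  by (rule eq_vecI) auto

lemma scalar_prod_mult_transpose_mult_vec: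
  fixes M N :: "real mat"
  assumes M: "M \<in> carrier_mat n k" and N: "N \<in> carrier_mat n k" and v: "v \<in> carrier_vec n"
  shows "v \<bullet> ((M * transpose_mat N) *\<^sub>v v) = (transpose_mat M *\<^sub>v v) \<bullet> (transpose_mat N *\<^sub>v v)"
  using transpose_vec_mult_scalar[OF M _ v, of "transpose_mat N *\<^sub>v v"] M N v by simp

text \<open>The middle component \<open>M12\<^sup>T v1\<close> is the maximiser of the quadratic form in that variable,
  so this is the quadratic form of the Schur complement \<open>M11 + M12 M12\<^sup>T\<close>.\<close>
lemma blk3_quadratic_form_eliminate_middle:
  fixes M11 M12 B D :: "real mat"
  assumes M11: "M11 \<in> carrier_mat n1 n1" and M12: "M12 \<in> carrier_mat n1 n2"
    and B: "B \<in> carrier_mat n1 n3" and D: "D \<in> carrier_mat n3 n3"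
    and v1: "v1 \<in> carrier_vec n1" and v3: "v3 \<in> carrier_vec n3"
  defines "u \<equiv> transpose_mat M12 *\<^sub>v v1"
  shows "((v1 @\<^sub>v u) @\<^sub>v v3) \<bullet>
      (blk3 M11 M12 B (transpose_mat M12) (- 1\<^sub>m n2) (0\<^sub>m n2 n3) (transpose_mat B) (0\<^sub>m n3 n2) D
         *\<^sub>v ((v1 @\<^sub>v u) @\<^sub>v v3))
    = v1 \<bullet> (M11 *\<^sub>v v1) + u \<bullet> u + v1 \<bullet> (B *\<^sub>v v3) + v3 \<bullet> (transpose_mat B *\<^sub>v v1) + v3 \<bullet> (D *\<^sub>v v3)"
proof -
  have u: "u \<in> carrier_vec n2" unfolding u_def using M12 v1 by simp
  have vu: "v1 @\<^sub>v u \<in> carrier_vec (n1 + n2)" using v1 u by simp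
  have inner: "(v1 @\<^sub>v u) \<bullet> (four_block_mat M11 M12 (transpose_mat M12) (- 1\<^sub>m n2) *\<^sub>v (v1 @\<^sub>v u))
      = v1 \<bullet> (M11 *\<^sub>v v1) + u \<bullet> u"
  proof -
    have "v1 \<bullet> (M12 *\<^sub>v u) = u \<bullet> u"
      using transpose_vec_mult_scalar[OF M12 u v1] unfolding u_def by simp
    moreover have "u \<bullet> (- 1\<^sub>m n2 *\<^sub>v u) = - (u \<bullet> u)"
      using u by simp
    moreover have "(v1 @\<^sub>v u) \<bullet> (four_block_mat M11 M12 (transpose_mat M12) (- 1\<^sub>m n2) *\<^sub>v (v1 @\<^sub>v u))
      = v1 \<bullet> (M11 *\<^sub>v v1) + v1 \<bullet> (M12 *\<^sub>v u) + u \<bullet> (transpose_mat M12 *\<^sub>v v1) + u \<bullet> (- 1\<^sub>m n2 *\<^sub>v u)"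
      by (rule scalar_prod_four_block_mat_mult_vec) (use M11 M12 v1 u in auto)
    ultimately show ?thesis by (simp add: u_def)
  qed
  have upper: "(v1 @\<^sub>v u) \<bullet> (vstack B (0\<^sub>m n2 n3) *\<^sub>v v3) = v1 \<bullet> (B *\<^sub>v v3)"
  proof -
    have "0\<^sub>m n2 n3 *\<^sub>v v3 = 0\<^sub>v n2" using v3 by auto
    then show ?thesis
      using B v1 v3 u by (simp add: vstack_mult_vec[OF B _ v3, of _ n2] scalar_prod_append[of _ n1 _ n2])
  qed
  have lower: "v3 \<bullet> (hstack (transpose_mat B) (0\<^sub>m n3 n2) *\<^sub>v (v1 @\<^sub>v u)) = v3 \<bullet> (transpose_mat B *\<^sub>v v1)"
  proof -
    have "0\<^sub>m n3 n2 *\<^sub>v u = 0\<^sub>v n3" using u by auto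
    then show ?thesis
      using B v1 u by (simp add: hstack_mult_vec[of _ n3 n1 _ n2])
  qed
  have "four_block_mat M11 M12 (transpose_mat M12) (- 1\<^sub>m n2) \<in> carrier_mat (n1 + n2) (n1 + n2)"
    using M11 M12 by auto
  moreover have "vstack B (0\<^sub>m n2 n3) \<in> carrier_mat (n1 + n2) n3"
    using B unfolding vstack_def by auto
  moreover have "hstack (transpose_mat B) (0\<^sub>m n3 n2) \<in> carrier_mat n3 (n1 + n2)"
    using B unfolding hstack_def by auto
  ultimately show ?thesis
    unfolding blk3_def using inner upper lower
    by (simp add: scalar_prod_four_block_mat_mult_vec[OF _ _ _ D vu v3])
qed

text \<open>The gap is \<open>|a - p - z|\<^sup>2 / 2\<close>.\<close>
lemma cross_term_le_linearization:
  fixes p z a :: "real vec"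
  assumes "p \<in> carrier_vec n" and "z \<in> carrier_vec n" and "a \<in> carrier_vec n"
  shows "- 2 * (p \<bullet> z) \<le> (a \<bullet> a - (p + z) \<bullet> a - a \<bullet> (p + z) + (p - z) \<bullet> (p - z)) / 2"
proof -
  have "a \<bullet> a - (p + z) \<bullet> a - a \<bullet> (p + z) + (p - z) \<bullet> (p - z) + 4 * (p \<bullet> z)
      = (\<Sum>i<n. a $ i * a $ i - (p $ i + z $ i) * a $ i - a $ i * (p $ i + z $ i)
                   + (p $ i - z $ i) * (p $ i - z $ i) + 4 * (p $ i * z $ i))"
    using assms unfolding scalar_prod_def
    by (simp add: lessThan_atLeast0 sum.distrib sum_subtractf sum_distrib_left sum_negf mult.commute[of "_ + _"])
  also have "\<dots> = (\<Sum>i<n. (a $ i - p $ i - z $ i)\<^sup>2)"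
    by (rule sum.cong) (auto simp: power2_eq_square algebra_simps)
  finally show ?thesis
    using sum_nonneg[of "{..<n}" "\<lambda>i. (a $ i - p $ i - z $ i)\<^sup>2"] by simp
qed

text \<open>Tested against \<open>v\<close>, with \<open>p = (B\<^sub>uP)\<^sup>T v\<close> and \<open>z = Zv\<close> one has \<open>X\<^sup>T v = p + z\<close>
  and \<open>Y\<^sup>T v = p - z\<close>, so the claim reduces to the previous lemma with \<open>a = X\<^sub>0\<^sup>T v\<close>.\<close>
lemma quadratic_form_cross_terms_le_H_lin:
  fixes Bu P Z P0 Z0 :: "real mat"
  assumes Bu: "Bu \<in> carrier_mat n k" and P: "P \<in> carrier_mat k k" and P_sym: "transpose_mat P = P"
    and P0: "P0 \<in> carrier_mat k k" and Z: "Z \<in> carrier_mat k n" and Z0: "Z0 \<in> carrier_mat k n"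
    and v: "v \<in> carrier_vec n"
  defines "u \<equiv> transpose_mat ((1 / sqrt 2) \<cdot>\<^sub>m (Bu * P - transpose_mat Z)) *\<^sub>v v"
  shows "- (v \<bullet> ((Bu * P * Z) *\<^sub>v v)) - v \<bullet> ((transpose_mat Z * P * transpose_mat Bu) *\<^sub>v v)
      \<le> v \<bullet> (((1/2) \<cdot>\<^sub>m H_lin Bu P Z P0 Z0) *\<^sub>v v) + u \<bullet> u"
proof -
  define X where "X = Bu * P + transpose_mat Z"
  define X0 where "X0 = Bu * P0 + transpose_mat Z0"
  define p where "p = transpose_mat (Bu * P) *\<^sub>v v"
  define z where "z = Z *\<^sub>v v"
  define a where "a = transpose_mat X0 *\<^sub>v v"
  have BuP: "Bu * P \<in> carrier_mat n k" using Bu P by simp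
  have ZT: "transpose_mat Z \<in> carrier_mat n k" using Z by simp
  have X: "X \<in> carrier_mat n k" and X0: "X0 \<in> carrier_mat n k"
    unfolding X_def X0_def using Bu P P0 Z Z0 by auto
  have p: "p \<in> carrier_vec k" and z: "z \<in> carrier_vec k" and a: "a \<in> carrier_vec k"
    unfolding p_def z_def a_def using BuP Z X0 v by auto
  have Xv: "transpose_mat X *\<^sub>v v = p + z"
    unfolding X_def p_def z_def using BuP ZT v by (simp add: transpose_add add_mult_distrib_mat_vec)
  have "v \<bullet> ((Bu * P * Z) *\<^sub>v v) = p \<bullet> z"
    using scalar_prod_mult_transpose_mult_vec[OF BuP ZT v] unfolding p_def z_def by simp
  moreover have "v \<bullet> ((transpose_mat Z * P * transpose_mat Bu) *\<^sub>v v) = p \<bullet> z"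
  proof -
    have "transpose_mat Z * P * transpose_mat Bu = transpose_mat Z * transpose_mat (Bu * P)"
      using Bu P Z by (simp add: transpose_mult[OF Bu P] P_sym assoc_mult_mat[of _ n k _ k _ n])
    then show ?thesis
      using scalar_prod_mult_transpose_mult_vec[OF ZT BuP v] comm_scalar_prod[OF z p]
      unfolding p_def z_def by simp
  qed
  moreover have "v \<bullet> (H_lin Bu P Z P0 Z0 *\<^sub>v v) = a \<bullet> a - (p + z) \<bullet> a - a \<bullet> (p + z)"
  proof -
    have XX: "X0 * transpose_mat X0 \<in> carrier_mat n n" "X * transpose_mat X0 \<in> carrier_mat n n"
      "X0 * transpose_mat X \<in> carrier_mat n n"
      using X X0 by auto
    have "v \<bullet> (H_lin Bu P Z P0 Z0 *\<^sub>v v) = v \<bullet> ((X0 * transpose_mat X0) *\<^sub>v v)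
        - v \<bullet> ((X * transpose_mat X0) *\<^sub>v v) - v \<bullet> ((X0 * transpose_mat X) *\<^sub>v v)"
      unfolding H_lin_def Let_def X_def[symmetric] X0_def[symmetric] using XX v
      by (simp add: minus_mult_distrib_mat_vec[of _ n n] scalar_prod_minus_distrib[of _ n] minus_carrier_mat)
    then show ?thesis
      unfolding scalar_prod_mult_transpose_mult_vec[OF X0 X0 v] scalar_prod_mult_transpose_mult_vec[OF X X0 v]
        scalar_prod_mult_transpose_mult_vec[OF X0 X v] Xv a_def .
  qed
  moreover have "u \<bullet> u = (p - z) \<bullet> (p - z) / 2"
  proof -
    have "u = (1 / sqrt 2) \<cdot>\<^sub>v (p - z)"
      unfolding u_def p_def z_def using BuP ZT v
      by (simp add: transpose_smult_mat smult_mat_mult_vec transpose_minus minus_mult_distrib_mat_vec)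
    then show ?thesis
      using p z by (simp add: power_divide)
  qed
  moreover have "H_lin Bu P Z P0 Z0 \<in> carrier_mat n n"
    unfolding H_lin_def Let_def X_def[symmetric] X0_def[symmetric] using X X0 by auto
  ultimately show ?thesis
    using cross_term_le_linearization[OF p z a] v by (simp add: smult_mat_mult_vec) argo
qed

lemma transpose_F1:
  fixes A Bu Bw S Z :: "real mat"
  assumes A: "A \<in> carrier_mat nx nx" and Bu: "Bu \<in> carrier_mat nx (sum_list nus)"
    and Bw: "Bw \<in> carrier_mat nx nw" and S: "S \<in> carrier_mat nx nx" and S_sym: "transpose_mat S = S"
    and Z: "Z \<in> carrier_mat (sum_list nus) nx"
  shows "transpose_mat (F1 nus nw A Bu Bw \<alpha> \<eta> S Z p) = F1 nus nw A Bu Bw \<alpha> \<eta> S Z p"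
proof -
  define P where "P = Pi_mat nus p"
  define K where "K = A * S + S * transpose_mat A + \<alpha> \<cdot>\<^sub>m S"
  define F11 where "F11 = K - Bu * P * Z - transpose_mat Z * P * transpose_mat Bu"
  have P: "P \<in> carrier_mat (sum_list nus) (sum_list nus)" and P_sym: "transpose_mat P = P"
    unfolding P_def by (rule Pi_mat_carrier transpose_Pi_mat)+
  have K: "K \<in> carrier_mat nx nx" and BPZ: "Bu * P * Z \<in> carrier_mat nx nx"
    and ZPB: "transpose_mat Z * P * transpose_mat Bu \<in> carrier_mat nx nx"
    unfolding K_def using A S Bu P Z by auto
  have "transpose_mat K = S * transpose_mat A + A * S + \<alpha> \<cdot>\<^sub>m S"
    unfolding K_def using A S S_sym
    by (simp add: transpose_add[of _ nx nx] transpose_mult[of _ nx nx _ nx] transpose_smult_mat)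
  also have "\<dots> = K"
    unfolding K_def using A S by (intro eq_matI) auto
  finally have K_sym: "transpose_mat K = K" .
  have "transpose_mat (Bu * P * Z) = transpose_mat Z * transpose_mat (Bu * P)"
    using transpose_mult[of "Bu * P" nx "sum_list nus" Z nx] Bu P Z by simp
  also have "\<dots> = transpose_mat Z * P * transpose_mat Bu"
    using Bu P Z P_sym by (simp add: transpose_mult[OF Bu P] assoc_mult_mat[of _ nx _ _ _ _ nx])
  finally have BPZ_transpose: "transpose_mat (Bu * P * Z) = transpose_mat Z * P * transpose_mat Bu" .
  then have ZPB_transpose: "transpose_mat (transpose_mat Z * P * transpose_mat Bu) = Bu * P * Z"
    by (metis transpose_transpose)
  have "transpose_mat F11 = K - transpose_mat Z * P * transpose_mat Bu - Bu * P * Z"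
    unfolding F11_def using K BPZ ZPB K_sym BPZ_transpose ZPB_transpose
    by (simp add: transpose_minus[of _ nx nx] minus_carrier_mat)
  also have "\<dots> = F11"
  proof -
    have "X - Y - W = X - W - Y"
      if "X \<in> carrier_mat nx nx" "Y \<in> carrier_mat nx nx" "W \<in> carrier_mat nx nx" for X Y W :: "real mat"
      using that by (intro eq_matI) auto
    then show ?thesis unfolding F11_def using K BPZ ZPB by blast
  qed
  finally have F11_sym: "transpose_mat F11 = F11" .
  have F11: "F11 \<in> carrier_mat nx nx"
    unfolding F11_def using K BPZ ZPB by (auto intro: minus_carrier_mat)
  have "transpose_mat Bw \<in> carrier_mat nw nx" and "(- (\<alpha> * \<eta>)) \<cdot>\<^sub>m 1\<^sub>m nw \<in> carrier_mat nw nw"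
    using Bw by auto
  then show ?thesis
    unfolding F1_def Let_def F11_def[symmetric] K_def[symmetric] P_def[symmetric]
    using F11_sym by (simp add: transpose_four_block_mat[OF F11 Bw] transpose_smult_mat)
qed

lemma nsd_F1_if_nsd_C_s:
  fixes nus :: "nat list" and A Bu Bw S Z Z0 :: "real mat"
  defines "nu \<equiv> sum_list nus"
  assumes A: "A \<in> carrier_mat nx nx" and Bu: "Bu \<in> carrier_mat nx nu"
    and Bw: "Bw \<in> carrier_mat nx nw" and S: "S \<in> carrier_mat nx nx" and S_sym: "transpose_mat S = S"
    and Z: "Z \<in> carrier_mat nu nx" and Z0: "Z0 \<in> carrier_mat nu nx"
    and C_s_nsd: "nsd (nx + nu + nw) (C_s nu nw A Bu Bw \<alpha> \<eta> S (Pi_mat nus p) Z (Pi_mat nus p0) Z0)"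
  shows "nsd (nx + nw) (F1 nus nw A Bu Bw \<alpha> \<eta> S Z p)"
proof -
  define P where "P = Pi_mat nus p"
  define P0 where "P0 = Pi_mat nus p0"
  define K where "K = A * S + S * transpose_mat A + \<alpha> \<cdot>\<^sub>m S"
  define F11 where "F11 = K - Bu * P * Z - transpose_mat Z * P * transpose_mat Bu"
  define M11 where "M11 = K + (1/2) \<cdot>\<^sub>m H_lin Bu P Z P0 Z0"
  define M12 where "M12 = (1 / sqrt 2) \<cdot>\<^sub>m (Bu * P - transpose_mat Z)"
  define D where "D = (- (\<alpha> * \<eta>)) \<cdot>\<^sub>m (1\<^sub>m nw :: real mat)"
  have P: "P \<in> carrier_mat nu nu" and P0: "P0 \<in> carrier_mat nu nu"
    unfolding P_def P0_def nu_def by (rule Pi_mat_carrier)+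
  have K: "K \<in> carrier_mat nx nx" and BPZ: "Bu * P * Z \<in> carrier_mat nx nx"
    and ZPB: "transpose_mat Z * P * transpose_mat Bu \<in> carrier_mat nx nx"
    and H: "H_lin Bu P Z P0 Z0 \<in> carrier_mat nx nx"
    unfolding K_def H_lin_def Let_def using A S Bu P P0 Z Z0 by auto
  have F11: "F11 \<in> carrier_mat nx nx" and M11: "M11 \<in> carrier_mat nx nx"
    and M12: "M12 \<in> carrier_mat nx nu" and D: "D \<in> carrier_mat nw nw"
    unfolding F11_def M11_def M12_def D_def using K BPZ ZPB H Bu P Z by (auto intro: minus_carrier_mat)
  have F1_eq: "F1 nus nw A Bu Bw \<alpha> \<eta> S Z p = four_block_mat F11 Bw (transpose_mat Bw) D"
    unfolding F1_def Let_def F11_def K_def D_def P_def ..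
  have C_s_eq: "C_s nu nw A Bu Bw \<alpha> \<eta> S (Pi_mat nus p) Z (Pi_mat nus p0) Z0
      = blk3 M11 M12 Bw (transpose_mat M12) (- 1\<^sub>m nu) (0\<^sub>m nu nw) (transpose_mat Bw) (0\<^sub>m nw nu) D"
    unfolding C_s_def M11_def M12_def K_def D_def P_def P0_def ..
  show ?thesis
    unfolding nsd_def
  proof (intro conjI ballI)
    show "F1 nus nw A Bu Bw \<alpha> \<eta> S Z p \<in> carrier_mat (nx + nw) (nx + nw)"
      unfolding F1_eq using F11 Bw D by auto
    show "transpose_mat (F1 nus nw A Bu Bw \<alpha> \<eta> S Z p) = F1 nus nw A Bu Bw \<alpha> \<eta> S Z p"
      using transpose_F1[OF A _ Bw S S_sym] Bu Z unfolding nu_def by blast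
  next
    fix v :: "real vec"
    assume v: "v \<in> carrier_vec (nx + nw)"
    define v1 where "v1 = vec_first v nx"
    define v2 where "v2 = vec_last v nw"
    define u where "u = transpose_mat M12 *\<^sub>v v1"
    have v1: "v1 \<in> carrier_vec nx" and v2: "v2 \<in> carrier_vec nw" and u: "u \<in> carrier_vec nu"
      unfolding v1_def v2_def u_def using M12 by auto
    have v_split: "v = v1 @\<^sub>v v2"
      unfolding v1_def v2_def using v by simp
    have F1_form: "v \<bullet> (F1 nus nw A Bu Bw \<alpha> \<eta> S Z p *\<^sub>v v) =
        v1 \<bullet> (F11 *\<^sub>v v1) + v1 \<bullet> (Bw *\<^sub>v v2) + v2 \<bullet> (transpose_mat Bw *\<^sub>v v1) + v2 \<bullet> (D *\<^sub>v v2)"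
      unfolding F1_eq v_split by (rule scalar_prod_four_block_mat_mult_vec[OF F11 Bw _ D v1 v2]) (use Bw in auto)
    have "((v1 @\<^sub>v u) @\<^sub>v v2) \<bullet> (C_s nu nw A Bu Bw \<alpha> \<eta> S (Pi_mat nus p) Z (Pi_mat nus p0) Z0
        *\<^sub>v ((v1 @\<^sub>v u) @\<^sub>v v2)) \<le> 0"
      using C_s_nsd v1 u v2 unfolding nsd_def by auto
    then have C_s_form: "v1 \<bullet> (M11 *\<^sub>v v1) + u \<bullet> u + v1 \<bullet> (Bw *\<^sub>v v2)
        + v2 \<bullet> (transpose_mat Bw *\<^sub>v v1) + v2 \<bullet> (D *\<^sub>v v2) \<le> 0"
      unfolding C_s_eq u_def blk3_quadratic_form_eliminate_middle[OF M11 M12 Bw D v1 v2] .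
    have "v1 \<bullet> (F11 *\<^sub>v v1) = v1 \<bullet> (K *\<^sub>v v1) - v1 \<bullet> ((Bu * P * Z) *\<^sub>v v1)
        - v1 \<bullet> ((transpose_mat Z * P * transpose_mat Bu) *\<^sub>v v1)"
      unfolding F11_def using K BPZ ZPB v1
      by (simp add: minus_mult_distrib_mat_vec[of _ nx nx] scalar_prod_minus_distrib[of _ nx] minus_carrier_mat)
    moreover have "v1 \<bullet> (M11 *\<^sub>v v1) = v1 \<bullet> (K *\<^sub>v v1) + v1 \<bullet> (((1/2) \<cdot>\<^sub>m H_lin Bu P Z P0 Z0) *\<^sub>v v1)"
    proof -
      have H_half: "(1/2) \<cdot>\<^sub>m H_lin Bu P Z P0 Z0 \<in> carrier_mat nx nx" using H by simp
      show ?thesis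
        unfolding M11_def add_mult_distrib_mat_vec[OF K H_half v1]
        using K H_half v1 by (auto intro: scalar_prod_add_distrib)
    qed
    moreover have "- (v1 \<bullet> ((Bu * P * Z) *\<^sub>v v1)) - v1 \<bullet> ((transpose_mat Z * P * transpose_mat Bu) *\<^sub>v v1)
        \<le> v1 \<bullet> (((1/2) \<cdot>\<^sub>m H_lin Bu P Z P0 Z0) *\<^sub>v v1) + u \<bullet> u"
      unfolding u_def M12_def
      by (rule quadratic_form_cross_terms_le_H_lin[OF Bu P _ P0 Z Z0 v1]) (simp add: P_def transpose_Pi_mat)
    ultimately show "v \<bullet> (F1 nus nw A Bu Bw \<alpha> \<eta> S Z p *\<^sub>v v) \<le> 0"
      using F1_form C_s_form by linarith
  qed
qed

theorem corollary2:
  fixes nus :: "nat list" and nx nw nz r :: nat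
    and A Bu Bw Cz Dwz H Z0 :: "real mat" and \<alpha> \<eta> :: real and \<alpha>\<pi> h p0 :: "real vec"
  assumes "length nus \<ge> 1" and "\<forall>k \<in> set nus. k \<ge> 1"
    and "nx \<ge> 1" and "nw \<ge> 1" and "nz \<ge> 1"
    and "A \<in> carrier_mat nx nx" and "Bu \<in> carrier_mat nx (sum_list nus)"
    and "Bw \<in> carrier_mat nx nw" and "Cz \<in> carrier_mat nz nx" and "Dwz \<in> carrier_mat nz nw"
    and "\<alpha> > 0" and "\<eta> > 0"
    and "\<alpha>\<pi> \<in> carrier_vec (length nus)" and "H \<in> carrier_mat r (length nus)" and "h \<in> carrier_vec r"
    and "p0 \<in> carrier_vec (length nus)" and "Z0 \<in> carrier_mat (sum_list nus) nx"
  shows "L_R nus nx nw nz r A Bu Bw Cz Dwz \<alpha> \<eta> \<alpha>\<pi> H h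
           \<le> L_hat nus nx nw nz r A Bu Bw Cz Dwz \<alpha> \<eta> \<alpha>\<pi> H h p0 Z0"
  unfolding L_R_def L_hat_def
  by (rule Inf_superset_mono) (blast dest: nsd_F1_if_nsd_C_s[OF assms(6-8) _ _ _ assms(17)])

end
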